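(* For any two-element set $E=\{x,y\}\subset\mathbb{N}$ we have $A_E=\{2\}\cup\Pi_x\cup\Pi_y\cup\Pi_{x-y}$.
   Context: $\mathbb{N}=\{1,2,3,\dots\}$; $\Pi$ is the set of primes; for a nonzero integer $z$, $\Pi_z$ is the set of prime divisors of $z$. For a nonempty finite set $E\subseteq\mathbb{N}$, $A_E=\{p\in\Pi:\exists k\in\mathbb{N}\ (E\subseteq\{0,k\}+p\mathbb{Z})\}$, where $\{0,k\}+p\mathbb{Z}=p\mathbb{Z}\cup(k+p\mathbb{Z})$. *)

theory Defs
  imports "HOL-Computational_Algebra.Primes"
begin

definition prime_divs :: "int \<Rightarrow> nat set" where
  "prime_divs z = {p. prime p \<and> int p dvd z}"

definition A_set :: "nat set \<Rightarrow> nat set" where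
  "A_set E = {p. prime p \<and> (\<exists>k::nat. k \<ge> 1 \<and>
      E \<subseteq> {e. int p dvd int e \<or> int p dvd (int e - int k)})}"

end

theory Submission
  imports Defs
begin

text \<open>If neither x nor y lies in p\<int>, both lie in the single class k + p\<int>, so p divides x - y.
  Conversely, a prime dividing x (resp. y, resp. x - y) admits the shift k = y (resp. x, resp. x),
  and p = 2 admits k = 1 since \<int> = 2\<int> \<union> (1 + 2\<int>).\<close>

lemma two_in_A_set: "2 \<in> A_set E"
proof -
  have "\<And>e::nat. 2 dvd int e \<or> 2 dvd (int e - int 1)" by presburger
  then show ?thesis unfolding A_set_def by fastforce
qed

lemma in_A_set_pair_if_dvd_left:
  assumes "prime p" and "y \<ge> 1" and "int p dvd int x"
  shows "p \<in> A_set {x, y}"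
  unfolding A_set_def using assms by (intro CollectI conjI exI[of _ y]) auto

lemma in_A_set_pair_if_dvd_diff:
  assumes "prime p" and "x \<ge> 1" and "int p dvd (int x - int y)"
  shows "p \<in> A_set {x, y}"
proof -
  have "int p dvd (int y - int x)"
    using assms(3) by (metis dvd_minus_iff minus_diff_eq)
  then show ?thesis
    unfolding A_set_def using assms by (intro CollectI conjI exI[of _ x]) auto
qed

lemma dvd_if_in_A_set_pair:
  assumes "p \<in> A_set {x, y}"
  shows "int p dvd int x \<or> int p dvd int y \<or> int p dvd (int x - int y)"
proof -
  obtain k :: nat where
    x_cov: "int p dvd int x \<or> int p dvd (int x - int k)" and
    y_cov: "int p dvd int y \<or> int p dvd (int y - int k)"
    using assms unfolding A_set_def by auto
  have "int p dvd (int x - int y)"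
    if "int p dvd (int x - int k)" and "int p dvd (int y - int k)"
    using dvd_diff[OF that] by simp
  then show ?thesis using x_cov y_cov by blast
qed

theorem lemma3p2:
  fixes x y :: nat
  assumes "x \<ge> 1" and "y \<ge> 1" and "x \<noteq> y"
  shows "A_set {x, y} = {2} \<union> prime_divs (int x) \<union> prime_divs (int y) \<union> prime_divs (int x - int y)"
proof (intro set_eqI iffI)
  fix p assume "p \<in> A_set {x, y}"
  moreover have "prime p" using \<open>p \<in> A_set {x, y}\<close> unfolding A_set_def by simp
  ultimately show "p \<in> {2} \<union> prime_divs (int x) \<union> prime_divs (int y) \<union> prime_divs (int x - int y)"
    using dvd_if_in_A_set_pair unfolding prime_divs_def by blast
next
  fix p assume "p \<in> {2} \<union> prime_divs (int x) \<union> prime_divs (int y) \<union> prime_divs (int x - int y)"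
  then consider "p = 2" | "prime p" "int p dvd int x" | "prime p" "int p dvd int y"
    | "prime p" "int p dvd (int x - int y)"
    unfolding prime_divs_def by auto
  then show "p \<in> A_set {x, y}"
  proof cases
    case 1
    then show ?thesis using two_in_A_set by simp
  next
    case 2
    then show ?thesis using in_A_set_pair_if_dvd_left assms(2) by blast
  next
    case 3
    then show ?thesis using in_A_set_pair_if_dvd_left[of p x y] assms(1) by (simp add: insert_commute)
  next
    case 4
    then show ?thesis using in_A_set_pair_if_dvd_diff assms(1) by blast
  qed
qed

end
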